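(* For every integer $n\ge 1$, $$\rho(P_n)\le 1+\frac{n(n-1)}{2}-3\left\lfloor \frac{n}{7}\right\rfloor.$$
   Context: $P_n$ denotes the path on $n$ vertices (of length $n-1$). All graphs are finite and simple. A coloring means a proper vertex coloring; an induced subgraph is rainbow if all its vertices have pairwise different colors. $\rho(H)$ is the least number $m$ such that some graph $G$ on $m$ vertices has the property that every proper vertex coloring of $G$ contains a rainbow induced subgraph isomorphic to $H$. *)

theory Defs
  imports Main
begin

definition is_graph :: "nat \<Rightarrow> (nat \<Rightarrow> nat \<Rightarrow> bool) \<Rightarrow> bool" where
  "is_graph m E \<longleftrightarrow> (\<forall>u v. E u v \<longrightarrow> u < m \<and> v < m) \<and> (\<forall>u v. E u v \<longrightarrow> E v u) \<and> (\<forall>u. \<not> E u u)"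

text \<open>Proper vertex colouring (colours are natural numbers; any colouring of a
finite graph can be renamed injectively into nat).\<close>
definition proper_coloring :: "nat \<Rightarrow> (nat \<Rightarrow> nat \<Rightarrow> bool) \<Rightarrow> (nat \<Rightarrow> nat) \<Rightarrow> bool" where
  "proper_coloring m E c \<longleftrightarrow> (\<forall>u<m. \<forall>v<m. E u v \<longrightarrow> c u \<noteq> c v)"

definition has_rainbow_induced_copy ::
  "nat \<Rightarrow> (nat \<Rightarrow> nat \<Rightarrow> bool) \<Rightarrow> nat \<Rightarrow> (nat \<Rightarrow> nat \<Rightarrow> bool) \<Rightarrow> (nat \<Rightarrow> nat) \<Rightarrow> bool" where
  "has_rainbow_induced_copy k EH m E c \<longleftrightarrow>
     (\<exists>f. (\<forall>i<k. f i < m) \<and> inj_on f {..<k} \<and>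
          (\<forall>i<k. \<forall>j<k. E (f i) (f j) \<longleftrightarrow> EH i j) \<and>
          inj_on (c \<circ> f) {..<k})"

definition rho :: "nat \<Rightarrow> (nat \<Rightarrow> nat \<Rightarrow> bool) \<Rightarrow> nat" where
  "rho k EH = (LEAST m. \<exists>E. is_graph m E \<and>
      (\<forall>c. proper_coloring m E c \<longrightarrow> has_rainbow_induced_copy k EH m E c))"

definition path_edge :: "nat \<Rightarrow> nat \<Rightarrow> bool" where
  "path_edge i j \<longleftrightarrow> i + 1 = j \<or> j + 1 = i"

end

theory Submission
  imports Defs
begin

text \<open>Replace vertex j of P_n by a clique of s j vertices (the level j) and join consecutive
  levels completely. In a proper colouring two consecutive levels use pairwise distinct colours,
  so if every nonempty set J of levels contains a level, or two consecutive levels, with at least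
  card J vertices in total, the colour sets of the levels satisfy Hall's condition. A system of
  distinct representatives then picks one vertex per level with pairwise distinct colours, and
  these vertices induce a rainbow P_n. The sizes 1, 1, 2, 3, 4, 4, 5, 6, ... (j - 1 from j = 5 on)
  qualify and give n(n-1)/2 + 1 - max 0 (n - 5) vertices, within the bound except at n = 7,
  where the sizes 1, 2, 3, 4, 2, 2, 4 are used instead.\<close>

lemma inj_on_if_disjoint_images:
  assumes "inj_on f K" "inj_on g L" "f ` K \<inter> g ` L = {}" "K \<inter> L = {}"
  shows "inj_on (\<lambda>i. if i \<in> K then f i else g i) (K \<union> L)"
proof -
  let ?h = "\<lambda>i. if i \<in> K then f i else g i"
  have on_K: "inj_on ?h K = inj_on f K" "?h ` K = f ` K"
    by (simp_all cong: inj_on_cong image_cong)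
  have "i \<notin> K" if "i \<in> L" for i
    using assms(4) that by blast
  then have on_L: "inj_on ?h L = inj_on g L" "?h ` L = g ` L"
    by (simp_all cong: inj_on_cong image_cong)
  show ?thesis
    using assms on_K on_L by (simp add: inj_on_Un Diff_triv Int_commute)
qed

lemma hall_condition_Diff_tight:
  fixes A :: "'i \<Rightarrow> 'a set"
  assumes "finite I" "\<And>i. i \<in> I \<Longrightarrow> finite (A i)"
    and hall: "\<And>K. K \<subseteq> I \<Longrightarrow> card K \<le> card (\<Union>(A ` K))"
    and tight: "K \<subseteq> I" "card (\<Union>(A ` K)) \<le> card K"
    and L: "L \<subseteq> I - K"
  shows "card L \<le> card (\<Union>i\<in>L. A i - \<Union>(A ` K))"
proof -
  let ?U = "\<Union>(A ` K)" and ?V = "\<Union>i\<in>L. A i - \<Union>(A ` K)"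
  have fin_UN: "finite (\<Union>(A ` X))" if "X \<subseteq> I" for X
    using that assms(1,2) by (meson finite_UN_I finite_subset subsetD)
  have L_sub: "L \<subseteq> I"
    using L by blast
  have fin: "finite L" "finite K" "finite ?U" "finite ?V"
    using finite_subset[OF L_sub assms(1)] finite_subset[OF tight(1) assms(1)] fin_UN[OF tight(1)]
      finite_subset[OF _ fin_UN[OF L_sub], of ?V] by auto
  have "card L + card K = card (L \<union> K)"
    using L fin by (intro card_Un_disjoint[symmetric]) auto
  also have "\<dots> \<le> card (\<Union>(A ` (L \<union> K)))"
    using L tight(1) by (intro hall) blast
  also have "\<Union>(A ` (L \<union> K)) = ?V \<union> ?U"
    by auto
  also have "card \<dots> = card ?V + card ?U"
    using fin by (intro card_Un_disjoint) auto
  finally show ?thesis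
    using tight(2) by linarith
qed

lemma hall_condition_Diff_surplus:
  assumes surplus: "\<And>K. K \<subseteq> I \<Longrightarrow> K \<noteq> {} \<Longrightarrow> K \<noteq> I \<Longrightarrow> card K < card (\<Union>(A ` K))"
    and "i \<in> I" "L \<subseteq> I - {i}"
  shows "card L \<le> card (\<Union>j\<in>L. A j - {x})"
proof (cases "L = {}")
  case False
  then have "card L < card (\<Union>(A ` L))"
    using assms(2,3) by (intro surplus) auto
  moreover have "card (\<Union>(A ` L)) - 1 \<le> card (\<Union>(A ` L) - {x})"
    by (simp add: card_Diff_singleton_if)
  moreover have "(\<Union>j\<in>L. A j - {x}) = \<Union>(A ` L) - {x}"
    by auto
  ultimately show ?thesis
    by simp
qed simp

lemma combine_distinct_representatives:
  assumes "K \<subseteq> I" "\<forall>i\<in>K. r1 i \<in> A i" "inj_on r1 K" "r1 ` K \<subseteq> C"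
    and "\<forall>i\<in>I - K. r2 i \<in> A i - C" "inj_on r2 (I - K)"
  shows "\<exists>r. (\<forall>i\<in>I. r i \<in> A i) \<and> inj_on r I"
proof -
  let ?r = "\<lambda>i. if i \<in> K then r1 i else r2 i"
  have "inj_on ?r (K \<union> (I - K))"
    using assms by (intro inj_on_if_disjoint_images) auto
  moreover have "K \<union> (I - K) = I"
    using assms(1) by blast
  ultimately show ?thesis
    using assms(2,5) by (intro exI[of _ ?r]) auto
qed

text \<open>The classical induction: either some proper nonempty K is tight, and the problem splits
  into K and its complement with the neighbours of K removed, or every such K has surplus, and
  one index can be matched arbitrarily.\<close>
theorem hall_marriage:
  fixes A :: "'i \<Rightarrow> 'a set"
  assumes "finite I" "\<And>i. i \<in> I \<Longrightarrow> finite (A i)"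
    and "\<And>K. K \<subseteq> I \<Longrightarrow> card K \<le> card (\<Union>(A ` K))"
  shows "\<exists>r. (\<forall>i\<in>I. r i \<in> A i) \<and> inj_on r I"
  using assms
proof (induction "card I" arbitrary: I A rule: less_induct)
  case less
  note fin = less.prems(1,2) and hall = less.prems(3)
  show ?case
  proof (cases "\<exists>K. K \<subseteq> I \<and> K \<noteq> {} \<and> K \<noteq> I \<and> card (\<Union>(A ` K)) \<le> card K")
    case True
    then obtain K where K: "K \<subseteq> I" "K \<noteq> {}" "K \<noteq> I" "card (\<Union>(A ` K)) \<le> card K"
      by blast
    have "card K < card I"
      using K(1,3) fin(1) by (simp add: psubset_card_mono)
    moreover have "finite K"
      using K(1) fin(1) by (rule finite_subset)
    ultimately have "\<exists>r. (\<forall>i\<in>K. r i \<in> A i) \<and> inj_on r K"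
      by (intro less.hyps) (use K(1) in \<open>auto intro: fin(2) hall\<close>)
    then obtain r1 where r1: "\<forall>i\<in>K. r1 i \<in> A i" "inj_on r1 K"
      by blast
    have "card (I - K) < card I"
      using K(1,2) fin(1) by (intro psubset_card_mono) auto
    moreover have "finite (I - K)"
      using fin(1) by simp
    ultimately have "\<exists>r. (\<forall>i\<in>I - K. r i \<in> A i - \<Union>(A ` K)) \<and> inj_on r (I - K)"
      by (intro less.hyps hall_condition_Diff_tight[OF fin hall K(1,4)]) (auto intro: fin(2))
    then obtain r2 where r2: "\<forall>i\<in>I - K. r2 i \<in> A i - \<Union>(A ` K)" "inj_on r2 (I - K)"
      by blast
    have "r1 ` K \<subseteq> \<Union>(A ` K)"
      using r1(1) by auto
    then show ?thesis
      by (rule combine_distinct_representatives[OF K(1) r1 _ r2])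
  next
    case no_tight: False
    show ?thesis
    proof (cases "I = {}")
      case False
      then obtain i where i: "i \<in> I"
        by blast
      have "card {i} \<le> card (A i)"
        using hall[of "{i}"] i by simp
      then obtain x where x: "x \<in> A i"
        by fastforce
      have surplus: "\<And>K. K \<subseteq> I \<Longrightarrow> K \<noteq> {} \<Longrightarrow> K \<noteq> I \<Longrightarrow> card K < card (\<Union>(A ` K))"
        using no_tight by (meson not_le)
      have "card (I - {i}) < card I"
        using fin(1) i by (rule card_Diff1_less)
      moreover have "finite (I - {i})"
        using fin(1) by simp
      ultimately
      have "\<exists>r. (\<forall>j\<in>I - {i}. r j \<in> A j - {x}) \<and> inj_on r (I - {i})"
        by (intro less.hyps hall_condition_Diff_surplus[OF surplus i]) (auto intro: fin(2))
      then obtain r2 where r2: "\<forall>j\<in>I - {i}. r2 j \<in> A j - {x}" "inj_on r2 (I - {i})"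
        by blast
      show ?thesis
        by (rule combine_distinct_representatives[of "{i}" I "\<lambda>_. x", OF _ _ _ _ r2]) (use i x in auto)
    qed simp
  qed
qed

definition level :: "nat \<Rightarrow> (nat \<Rightarrow> nat) \<Rightarrow> nat \<Rightarrow> nat set" where
  "level m lv j = {u. u < m \<and> lv u = j}"

definition path_blowup :: "nat \<Rightarrow> (nat \<Rightarrow> nat) \<Rightarrow> nat \<Rightarrow> nat \<Rightarrow> bool" where
  "path_blowup m lv u v \<longleftrightarrow>
     u < m \<and> v < m \<and> u \<noteq> v \<and> (lv u = lv v \<or> Suc (lv u) = lv v \<or> Suc (lv v) = lv u)"

definition blowup_hall_condition :: "nat \<Rightarrow> (nat \<Rightarrow> nat) \<Rightarrow> bool" where
  "blowup_hall_condition n s \<longleftrightarrow> (\<forall>J\<in>Pow {..<n}. J \<noteq> {} \<longrightarrow>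
     (\<exists>j\<in>J. card J \<le> s j) \<or> (\<exists>j\<in>J. Suc j \<in> J \<and> card J \<le> s j + s (Suc j)))"

lemma is_graph_path_blowup: "is_graph m (path_blowup m lv)"
  unfolding is_graph_def path_blowup_def by auto

lemma inj_on_adjacent_levels:
  assumes "proper_coloring m (path_blowup m lv) c"
  shows "inj_on c (level m lv j \<union> level m lv (Suc j))"
  using assms unfolding proper_coloring_def path_blowup_def level_def inj_on_def by fastforce

lemma hall_condition_level_colours:
  assumes c: "proper_coloring m (path_blowup m lv) c"
    and size: "\<And>j. j < n \<Longrightarrow> card (level m lv j) = s j"
    and cond: "blowup_hall_condition n s"
    and K: "K \<subseteq> {..<n}"
  shows "card K \<le> card (\<Union>j\<in>K. c ` level m lv j)"
proof (cases "K = {}")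
  case False
  have fin: "finite (\<Union>j\<in>K. c ` level m lv j)"
    using K finite_subset by (fastforce simp: level_def)
  have card_colours:
    "card (c ` (level m lv j \<union> level m lv (Suc j))) = card (level m lv j) + card (level m lv (Suc j))" for j
  proof -
    have "card (c ` (level m lv j \<union> level m lv (Suc j))) = card (level m lv j \<union> level m lv (Suc j))"
      using inj_on_adjacent_levels[OF c] by (rule card_image)
    also have "\<dots> = card (level m lv j) + card (level m lv (Suc j))"
      by (rule card_Un_disjoint) (auto simp: level_def)
    finally show ?thesis .
  qed
  from cond False K consider
      (single) j where "j \<in> K" "card K \<le> s j"
    | (pair) j where "j \<in> K" "Suc j \<in> K" "card K \<le> s j + s (Suc j)"
    unfolding blowup_hall_condition_def by blast
  then show ?thesis
  proof cases
    case single
    have "card K \<le> card (c ` level m lv j)"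
      using single K size card_image[OF inj_on_subset[OF inj_on_adjacent_levels[OF c, of j]]]
      by auto
    also have "\<dots> \<le> card (\<Union>j\<in>K. c ` level m lv j)"
      using single fin by (intro card_mono) auto
    finally show ?thesis .
  next
    case pair
    have "card K \<le> card (c ` (level m lv j \<union> level m lv (Suc j)))"
      using pair K size card_colours[of j] by auto
    also have "\<dots> \<le> card (\<Union>j\<in>K. c ` level m lv j)"
      using pair fin by (intro card_mono) auto
    finally show ?thesis .
  qed
qed simp

lemma rainbow_induced_path_in_path_blowup:
  assumes size: "\<And>j. j < n \<Longrightarrow> card (level m lv j) = s j"
    and cond: "blowup_hall_condition n s"
    and c: "proper_coloring m (path_blowup m lv) c"
  shows "has_rainbow_induced_copy n path_edge m (path_blowup m lv) c"
proof -
  obtain r where r: "\<forall>j\<in>{..<n}. r j \<in> c ` level m lv j" "inj_on r {..<n}"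
    using hall_marriage[of "{..<n}" "\<lambda>j. c ` level m lv j"]
      hall_condition_level_colours[OF c size cond] by (auto simp: level_def)
  then have "\<forall>j\<in>{..<n}. \<exists>u. u \<in> level m lv j \<and> c u = r j"
    by (fastforce simp: image_iff)
  then obtain f where f: "\<forall>j\<in>{..<n}. f j \<in> level m lv j \<and> c (f j) = r j"
    by (metis bchoice)
  have rainbow: "inj_on (c \<circ> f) {..<n}"
    using r(2) f by (simp add: inj_on_def)
  then have inj: "inj_on f {..<n}"
    using inj_on_imageI2 by blast
  show ?thesis
    unfolding has_rainbow_induced_copy_def
  proof (intro exI conjI allI impI)
    fix i j assume ij: "i < n" "j < n"
    then have "f i = f j \<longleftrightarrow> i = j"
      using inj by (auto dest: inj_onD)
    then show "path_blowup m lv (f i) (f j) \<longleftrightarrow> path_edge i j"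
      using f ij unfolding path_blowup_def path_edge_def level_def by auto
  qed (use f inj rainbow in \<open>auto simp: level_def\<close>)
qed

lemma exists_levels:
  "\<exists>lv. (\<forall>u < (\<Sum>j<n. s j). lv u < n) \<and> (\<forall>j<n. card (level (\<Sum>j<n. s j) lv j) = s j)"
proof (induction n)
  case (Suc n)
  define M where "M = (\<Sum>j<n. s j)"
  from Suc obtain lv where lv: "\<forall>u<M. lv u < n" "\<forall>j<n. card (level M lv j) = s j"
    unfolding M_def by blast
  define lv' where "lv' u = (if u < M then lv u else n)" for u
  have "\<not> (u < M \<and> lv u = n)" for u
    using lv(1) by auto
  then have "level (M + s n) lv' n = {M..<M + s n}"
    by (auto simp: level_def lv'_def)
  moreover have "level (M + s n) lv' j = level M lv j" if "j < n" for j
    using that by (auto simp: level_def lv'_def)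
  moreover have "\<forall>u < M + s n. lv' u < Suc n"
    using lv(1) by (simp add: lv'_def less_Suc_eq)
  ultimately show ?case
    using lv(2) by (intro exI[of _ lv']) (auto simp: M_def less_Suc_eq)
qed simp

lemma rho_path_le_sum:
  assumes "blowup_hall_condition n s"
  shows "rho n path_edge \<le> (\<Sum>j<n. s j)"
proof -
  obtain lv where "\<And>j. j < n \<Longrightarrow> card (level (\<Sum>j<n. s j) lv j) = s j"
    using exists_levels by blast
  then show ?thesis
    unfolding rho_def
    using is_graph_path_blowup rainbow_induced_path_in_path_blowup[OF _ assms] by (intro Least_le) blast
qed

definition level_size :: "nat \<Rightarrow> nat" where
  "level_size j = (if j = 0 then 1 else if j < 5 then j else j - 1)"

text \<open>Let m be the largest element of J. Either J is covered by level m alone, or m - 1 \<in> J and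
  the pair m - 1, m covers it, or J is exactly {..m} - {m - 1} with m \<ge> 5, and the pair
  m - 3, m - 2 covers it.\<close>
lemma blowup_hall_condition_level_size: "blowup_hall_condition n level_size"
  unfolding blowup_hall_condition_def
proof (intro ballI impI)
  fix J assume J: "J \<in> Pow {..<n}" "J \<noteq> {}"
  then have fin: "finite J"
    using finite_subset[of J "{..<n}"] by simp
  define m where "m = Max J"
  have m: "m \<in> J" "J \<subseteq> {..m}"
    using fin J(2) by (auto simp: m_def)
  then have card_le: "card J \<le> Suc m"
    using card_mono[of "{..m}" J] by simp
  show "(\<exists>j\<in>J. card J \<le> level_size j) \<or> (\<exists>j\<in>J. Suc j \<in> J \<and> card J \<le> level_size j + level_size (Suc j))"
  proof (cases "card J \<le> level_size m")
    case False
    then have "1 \<le> m"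
      using card_le by (cases m) (auto simp: level_size_def)
    show ?thesis
    proof (cases "m - 1 \<in> J")
      case True
      moreover have "Suc (m - 1) \<in> J"
        using m(1) \<open>1 \<le> m\<close> by simp
      moreover have "card J \<le> level_size (m - 1) + level_size (Suc (m - 1))"
        using card_le \<open>1 \<le> m\<close> by (auto simp: level_size_def)
      ultimately show ?thesis
        by blast
    next
      case False
      then have sub: "J \<subseteq> {..m} - {m - 1}"
        using m(2) by blast
      moreover have "card ({..m} - {m - 1}) = m"
        using \<open>1 \<le> m\<close> by simp
      ultimately have "card J \<le> m"
        using card_mono[OF _ sub] by simp
      then have "5 \<le> m" "card J = m"
        using \<open>\<not> card J \<le> level_size m\<close> \<open>1 \<le> m\<close> by (auto simp: level_size_def split: if_splits)
      then have "J = {..m} - {m - 1}"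
        using card_subset_eq[OF _ sub] \<open>card ({..m} - {m - 1}) = m\<close> by simp
      then have "m - 3 \<in> J" "Suc (m - 3) \<in> J"
        using \<open>5 \<le> m\<close> by auto
      moreover have "card J \<le> level_size (m - 3) + level_size (Suc (m - 3))"
        using \<open>card J = m\<close> \<open>5 \<le> m\<close> by (auto simp: level_size_def)
      ultimately show ?thesis
        by blast
    qed
  qed (use m(1) in blast)
qed

lemma sum_level_size:
  assumes "1 \<le> n"
  shows "2 * (\<Sum>j<n. level_size j) + 2 * (n - 5) = n * (n - 1) + 2"
  using assms
proof (induction n rule: nat_induct_at_least)
  case base
  then show ?case
    by (simp add: level_size_def)
next
  case (Suc n)
  have "2 * (\<Sum>j<Suc n. level_size j) + 2 * (Suc n - 5) = (2 * (\<Sum>j<n. level_size j) + 2 * (n - 5)) + 2 * n"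
    using Suc.hyps by (simp add: level_size_def) arith
  also have "\<dots> = Suc n * (Suc n - 1) + 2"
    using Suc by (cases n) (simp_all add: algebra_simps)
  finally show ?case .
qed

lemma sum_level_size_le:
  assumes "1 \<le> n" "n \<noteq> 7"
  shows "int (\<Sum>j<n. level_size j) \<le> 1 + (int n * (int n - 1)) div 2 - 3 * (int n div 7)"
proof -
  let ?S = "\<Sum>j<n. level_size j"
  have "2 * int ?S + 2 * int (n - 5) = int n * (int n - 1) + 2"
    using arg_cong[OF sum_level_size[OF assms(1)], of int]
    by (simp only: of_nat_add of_nat_mult of_nat_numeral of_nat_diff[OF assms(1)] of_nat_1)
  then have "int n * (int n - 1) = 2 * (int ?S + int (n - 5) - 1)"
    by (simp add: algebra_simps)
  then have "(int n * (int n - 1)) div 2 = int ?S + int (n - 5) - 1"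
    by simp
  moreover have "3 * (int n div 7) \<le> int (n - 5)"
    using assms by presburger
  ultimately show ?thesis
    by linarith
qed

text \<open>For n = 7 the general level sizes add up to 20, one more than the bound; these add up to 18.\<close>
definition level_size_P7 :: "nat \<Rightarrow> nat" where
  "level_size_P7 j = [1, 2, 3, 4, 2, 2, 4] ! j"

text \<open>Listing the subsets as sublists lets code_simp enumerate all 128 of them quickly.\<close>
lemma blowup_hall_condition_level_size_P7: "blowup_hall_condition 7 level_size_P7"
proof -
  have subsets: "Pow {..<7} = set ` set (subseqs [0..<7::nat])"
    by (simp add: subseqs_powset lessThan_atLeast0)
  show ?thesis
    unfolding blowup_hall_condition_def level_size_P7_def subsets by code_simp
qed

theorem corollary5p2:
  fixes n :: nat
  assumes "n \<ge> 1"
  shows "int (rho n path_edge) \<le> 1 + (int n * (int n - 1)) div 2 - 3 * (int n div 7)"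
proof (cases "n = 7")
  case True
  have "rho 7 path_edge \<le> (\<Sum>j<7. level_size_P7 j)"
    by (rule rho_path_le_sum[OF blowup_hall_condition_level_size_P7])
  also have "\<dots> = 18"
    unfolding level_size_P7_def by code_simp
  finally show ?thesis
    using True by simp
next
  case False
  have "rho n path_edge \<le> (\<Sum>j<n. level_size j)"
    by (rule rho_path_le_sum[OF blowup_hall_condition_level_size])
  then show ?thesis
    using sum_level_size_le[OF assms False] by linarith
qed

end
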